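(* Let $N\ge 2$, $p\ge 2$, let $\Omega\subset\mathbb{R}^N$ be a radially symmetric domain and let $V\in C(\Omega)$ with $V\ge 0$ in $\Omega$. Let $u,v$ be radial functions of class $C^2$ in $\Omega$ such that $$0<v\le u\quad\text{in }\Omega$$ and $$u'\le v'<0\ \text{ in }\Omega\qquad\text{or}\qquad u'\ge v'>0\ \text{ in }\Omega .$$ If $u$ is a subsolution and $v$ is a supersolution of the equation $-\Delta_p w-V|w|^{p-2}w=0$ in $\Omega$, then $u-v$ is a subsolution of this equation in $\Omega$.
   Context: Here $\Delta_p w=\nabla\cdot(|\nabla w|^{p-2}\nabla w)$ is the $p$-Laplacian. Sub- and supersolutions are understood in the classical sense: a $C^2$ function $w$ on $\Omega$ is a subsolution (resp. supersolution) if $-\Delta_p w-V|w|^{p-2}w\le 0$ (resp. $\ge 0$) pointwise in $\Omega$. A radial function $w(x)=\phi(|x|)$ is identified with $\phi$, and $w'$ denotes $\phi'(r)$, the derivative with respect to $r=|x|$. A domain is a connected open set. *)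

theory Defs
  imports "HOL-Analysis.Analysis"
begin

text \<open>Points of R^N are vectors of type real^'n, N = CARD('n).\<close>


definition pd :: "'n::finite \<Rightarrow> (real^'n \<Rightarrow> real) \<Rightarrow> real^'n \<Rightarrow> real" where
  "pd i w x = frechet_derivative w (at x) (axis i 1)"

definition grad :: "(real^'n::finite \<Rightarrow> real) \<Rightarrow> real^'n \<Rightarrow> real^'n" where
  "grad w x = (\<chi> i. pd i w x)"

definition C2_on :: "(real^'n::finite) set \<Rightarrow> (real^'n \<Rightarrow> real) \<Rightarrow> bool" where
  "C2_on \<Omega> w \<longleftrightarrow> w differentiable_on \<Omega>
     \<and> (\<forall>i. (pd i w) differentiable_on \<Omega>)
     \<and> (\<forall>i j. continuous_on \<Omega> (pd j (pd i w)))"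

definition p_laplacian :: "real \<Rightarrow> (real^'n::finite \<Rightarrow> real) \<Rightarrow> real^'n \<Rightarrow> real" where
  "p_laplacian p w x = (\<Sum>i\<in>UNIV. pd i (\<lambda>y. norm (grad w y) powr (p - 2) * grad w y $ i) x)"

definition radially_symmetric_domain :: "(real^'n::finite) set \<Rightarrow> bool" where
  "radially_symmetric_domain \<Omega> \<longleftrightarrow> open \<Omega> \<and> connected \<Omega> \<and>
     (\<forall>x\<in>\<Omega>. \<forall>y. norm y = norm x \<longrightarrow> y \<in> \<Omega>)"

definition radial_on :: "(real^'n::finite) set \<Rightarrow> (real^'n \<Rightarrow> real) \<Rightarrow> bool" where
  "radial_on \<Omega> w \<longleftrightarrow> (\<forall>x\<in>\<Omega>. \<forall>y\<in>\<Omega>. norm x = norm y \<longrightarrow> w x = w y)"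

text \<open>Radial derivative w'(|x|) = grad w(x) . x/|x| (derivative in r).\<close>
definition rad_deriv :: "(real^'n::finite \<Rightarrow> real) \<Rightarrow> real^'n \<Rightarrow> real" where
  "rad_deriv w x = grad w x \<bullet> (x /\<^sub>R norm x)"

definition subsolution :: "real \<Rightarrow> (real^'n::finite \<Rightarrow> real) \<Rightarrow> (real^'n) set \<Rightarrow> (real^'n \<Rightarrow> real) \<Rightarrow> bool" where
  "subsolution p V \<Omega> w \<longleftrightarrow> C2_on \<Omega> w \<and>
     (\<forall>x\<in>\<Omega>. - p_laplacian p w x - V x * \<bar>w x\<bar> powr (p - 2) * w x \<le> 0)"

definition supersolution :: "real \<Rightarrow> (real^'n::finite \<Rightarrow> real) \<Rightarrow> (real^'n) set \<Rightarrow> (real^'n \<Rightarrow> real) \<Rightarrow> bool" where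
  "supersolution p V \<Omega> w \<longleftrightarrow> C2_on \<Omega> w \<and>
     (\<forall>x\<in>\<Omega>. - p_laplacian p w x - V x * \<bar>w x\<bar> powr (p - 2) * w x \<ge> 0)"

end

(* For a radial function w with radial derivatives w', w'' and r = |x|,
     \<Delta>_p w = phi_p'(w') w'' + (N - 1)/r phi_p(w'),   phi_p(t) = |t|^(p-2) t.
   For p > 2 this is |w'|^(p-2) ((p - 1) w'' + (N - 1)/r w'): a power of |w'| times an
   expression linear in (w', w''). Dividing the inequalities for u and v by |u'|^(p-2) and
   |v'|^(p-2), subtracting, and multiplying by |u' - v'|^(p-2) bounds -\<Delta>_p(u - v) by
   V |u' - v'|^(p-2) (u^(p-1)/|u'|^(p-2) - v^(p-1)/|v'|^(p-2)).  The sign hypothesis gives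
   |u'| = |v'| + |u' - v'|, and the perspective x^(p-1)/a^(p-2) of a convex power is
   subadditive, so this is at most V (u - v)^(p-1).  For p = 2 the operator is linear. *)

theory Submission
  imports Defs
begin

lemma frechet_derivative_cong_open:
  assumes "open S" "x \<in> S" "\<And>y. y \<in> S \<Longrightarrow> f y = g y"
  shows "frechet_derivative f (at x) = frechet_derivative g (at x)"
proof -
  have "(f has_derivative D) (at x) \<longleftrightarrow> (g has_derivative D) (at x)" for D
    by (rule iffI; erule has_derivative_transform_within_open[OF _ assms(1,2)])
      (simp_all add: assms(3))
  then show ?thesis unfolding frechet_derivative_def by simp
qed

lemma pd_cong_open:
  "open S \<Longrightarrow> x \<in> S \<Longrightarrow> (\<And>y. y \<in> S \<Longrightarrow> f y = g y) \<Longrightarrow> pd i f x = pd i g x"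
  unfolding pd_def using frechet_derivative_cong_open by metis

lemma has_derivative_imp_pd_eq: "(f has_derivative f') (at x) \<Longrightarrow> pd i f x = f' (axis i 1)"
  unfolding pd_def using frechet_derivative_at by metis

lemma pd_diff:
  assumes "u differentiable (at x)" "v differentiable (at x)"
  shows "pd i (\<lambda>y. u y - v y) x = pd i u x - pd i v x"
proof -
  have "((\<lambda>y. u y - v y) has_derivative
      (\<lambda>h. frechet_derivative u (at x) h - frechet_derivative v (at x) h)) (at x)"
    using assms by (intro has_derivative_diff) (simp_all flip: frechet_derivative_works)
  then have "pd i (\<lambda>y. u y - v y) x
      = frechet_derivative u (at x) (axis i 1) - frechet_derivative v (at x) (axis i 1)"
    by (rule has_derivative_imp_pd_eq)
  then show ?thesis by (simp add: pd_def)
qed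

lemma linear_eq_sum_axis:
  fixes f :: "real^'n::finite \<Rightarrow> real"
  assumes "linear f"
  shows "f x = (\<Sum>i\<in>UNIV. x$i * f (axis i 1))"
proof -
  have "f x = f (\<Sum>i\<in>UNIV. x$i *\<^sub>R axis i 1)"
    using basis_expansion[of x] by (simp add: scalar_mult_eq_scaleR)
  also have "\<dots> = (\<Sum>i\<in>UNIV. x$i * f (axis i 1))"
    using assms by (simp add: linear_sum linear_scale)
  finally show ?thesis .
qed

lemma has_derivative_grad:
  assumes "w differentiable (at x)"
  shows "(w has_derivative (\<lambda>h. grad w x \<bullet> h)) (at x)"
proof -
  let ?D = "frechet_derivative w (at x)"
  have D: "(w has_derivative ?D) (at x)" using assms frechet_derivative_works by blast
  then have "linear ?D" using has_derivative_linear by blast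
  then have "?D h = grad w x \<bullet> h" for h
    by (subst linear_eq_sum_axis[of ?D]) (auto simp: grad_def pd_def inner_vec_def mult.commute)
  then have "?D = (\<lambda>h. grad w x \<bullet> h)" by blast
  then show ?thesis using D by simp
qed

lemma differentiable_on_cong:
  assumes "f differentiable_on S" "\<And>x. x \<in> S \<Longrightarrow> f x = g x"
  shows "g differentiable_on S"
  unfolding differentiable_on_def
proof
  fix x assume x: "x \<in> S"
  then obtain D where "(f has_derivative D) (at x within S)"
    using assms(1) by (auto simp: differentiable_on_def differentiable_def)
  then have "(g has_derivative D) (at x within S)"
    by (rule has_derivative_transform[OF x, rotated]) (simp add: assms(2))
  then show "g differentiable (at x within S)" by (auto simp: differentiable_def)
qed

lemma C2_on_differentiable_at:
  assumes "C2_on S w" "open S" "x \<in> S"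
  shows "w differentiable (at x)" and "pd i w differentiable (at x)"
  using assms by (auto simp: C2_on_def differentiable_on_eq_differentiable_at)

lemma C2_on_diff:
  assumes S: "open S" and u: "C2_on S u" and v: "C2_on S v"
  shows "C2_on S (\<lambda>x. u x - v x)"
proof -
  note du = C2_on_differentiable_at(1)[OF u S] C2_on_differentiable_at(1)[OF v S]
  note dpu = C2_on_differentiable_at(2)[OF u S] C2_on_differentiable_at(2)[OF v S]
  have pd_uv: "pd i (\<lambda>x. u x - v x) y = pd i u y - pd i v y" if "y \<in> S" for i y
    using pd_diff du(1,2)[OF that] by blast
  have "(\<lambda>y. pd i u y - pd i v y) differentiable_on S" for i
    using u v by (auto simp: C2_on_def intro: differentiable_on_diff)
  then have dpd: "pd i (\<lambda>x. u x - v x) differentiable_on S" for i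
    by (rule differentiable_on_cong) (simp_all add: pd_uv)
  have "pd j (pd i (\<lambda>x. u x - v x)) y = pd j (pd i u) y - pd j (pd i v) y" if "y \<in> S" for i j y
    using pd_cong_open[OF S that pd_uv] pd_diff[OF dpu(1,2)[OF that]] by simp
  moreover have "continuous_on S (\<lambda>y. pd j (pd i u) y - pd j (pd i v) y)" for i j
    using u v by (intro continuous_on_diff) (auto simp: C2_on_def)
  ultimately have "continuous_on S (pd j (pd i (\<lambda>x. u x - v x)))" for i j
    by (metis (no_types, lifting) continuous_on_eq)
  moreover have "(\<lambda>x. u x - v x) differentiable_on S"
    using u v by (auto simp: C2_on_def intro: differentiable_on_diff)
  ultimately show ?thesis using dpd by (simp add: C2_on_def)
qed

lemma grad_diff:
  "u differentiable (at x) \<Longrightarrow> v differentiable (at x) \<Longrightarrow>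
     grad (\<lambda>y. u y - v y) x = grad u x - grad v x"
  by (simp add: grad_def pd_diff vec_eq_iff)

lemma rad_deriv_diff:
  "u differentiable (at x) \<Longrightarrow> v differentiable (at x) \<Longrightarrow>
     rad_deriv (\<lambda>y. u y - v y) x = rad_deriv u x - rad_deriv v x"
  by (simp add: rad_deriv_def grad_diff inner_diff_left right_diff_distrib)

lemma rad_deriv_differentiable:
  fixes w :: "real^'n::finite \<Rightarrow> real"
  assumes "\<And>i. pd i w differentiable (at x)" "x \<noteq> 0"
  shows "rad_deriv w differentiable (at x)"
proof -
  have "(\<lambda>y. y $ i) differentiable (at x)" for i :: 'n
    by (rule bounded_linear_imp_differentiable) (rule bounded_linear_vec_nth)
  then have "(\<lambda>y. (\<Sum>i\<in>UNIV. pd i w y * y $ i) / norm y) differentiable (at x)"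
    using assms by (intro differentiable_divide differentiable_sum differentiable_mult
        differentiable_norm_at) auto
  moreover have "rad_deriv w = (\<lambda>y. (\<Sum>i\<in>UNIV. pd i w y * y $ i) / norm y)"
    by (simp add: fun_eq_iff rad_deriv_def grad_def inner_vec_def sum_divide_distrib field_simps)
  ultimately show ?thesis by simp
qed

text \<open>The function is constant along the great circle through x in the direction of y.\<close>
lemma grad_radial_orthogonal:
  fixes w :: "real^'n::finite \<Rightarrow> real"
  assumes sph: "\<forall>x\<in>\<Omega>. \<forall>y. norm y = norm x \<longrightarrow> y \<in> \<Omega>"
    and rad: "radial_on \<Omega> w" and x: "x \<in> \<Omega>" "x \<noteq> 0" and dw: "w differentiable (at x)"
    and xy: "x \<bullet> y = 0"
  shows "grad w x \<bullet> y = 0"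
proof (cases "y = 0")
  case False
  define k where "k = norm x / norm y"
  define c where "c t = cos t *\<^sub>R x + (sin t * k) *\<^sub>R y" for t
  have c_norm: "norm (c t) = norm x" for t
  proof -
    have "(norm (c t))\<^sup>2 = (cos t)\<^sup>2 * (norm x)\<^sup>2 + (sin t * k)\<^sup>2 * (norm y)\<^sup>2"
      unfolding c_def power2_norm_eq_inner
      by (simp add: inner_add_left inner_add_right xy inner_commute[of y x] power2_eq_square
          algebra_simps)
    also have "\<dots> = (norm x)\<^sup>2"
      using False by (simp add: k_def power_mult_distrib power_divide flip: distrib_right)
    finally show ?thesis by (simp add: power2_eq_iff_nonneg)
  qed
  have "c t \<in> \<Omega>" for t
    using sph x(1) c_norm by blast
  then have "w (c t) = w x" for t
    using rad x(1) c_norm unfolding radial_on_def by blast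
  then have const: "((\<lambda>t. w (c t)) has_derivative (\<lambda>h. 0)) (at 0)"
    by simp
  have cD: "(c has_derivative (\<lambda>h. h *\<^sub>R (k *\<^sub>R y))) (at 0)" and c0: "c 0 = x"
    unfolding c_def by (auto intro!: derivative_eq_intros)
  have "((\<lambda>t. w (c t)) has_derivative (\<lambda>h. grad w x \<bullet> (h *\<^sub>R (k *\<^sub>R y)))) (at 0)"
    using diff_chain_at[OF cD, of w "\<lambda>h. grad w x \<bullet> h"] has_derivative_grad[OF dw] c0
    by (simp add: o_def)
  from has_derivative_unique[OF this const]
  have "grad w x \<bullet> (k *\<^sub>R y) = 0"
    by (drule_tac fun_cong[where x = 1]) simp
  moreover have "k \<noteq> 0" using False x xy by (auto simp: k_def)
  ultimately show ?thesis by simp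
qed simp

lemma grad_radial:
  fixes w :: "real^'n::finite \<Rightarrow> real"
  assumes sph: "\<forall>x\<in>\<Omega>. \<forall>y. norm y = norm x \<longrightarrow> y \<in> \<Omega>"
    and rad: "radial_on \<Omega> w" and x: "x \<in> \<Omega>" "x \<noteq> 0" and dw: "w differentiable (at x)"
  shows "grad w x = rad_deriv w x *\<^sub>R (x /\<^sub>R norm x)"
proof -
  define z where "z = grad w x - ((grad w x \<bullet> x) / (x \<bullet> x)) *\<^sub>R x"
  have "x \<bullet> z = 0" using x by (simp add: z_def inner_diff_right inner_commute)
  moreover from this have "grad w x \<bullet> z = 0"
    using grad_radial_orthogonal[OF sph rad x dw] by blast
  ultimately have "z \<bullet> z = 0"
    by (simp add: z_def inner_diff_left inner_commute)
  then have "grad w x = ((grad w x \<bullet> x) / (x \<bullet> x)) *\<^sub>R x" by (simp add: z_def)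
  then show ?thesis using x
    by (simp add: rad_deriv_def dot_square_norm power2_eq_square field_simps)
qed

lemma radial_on_diff:
  assumes "radial_on S u" "radial_on S v"
  shows "radial_on S (\<lambda>x. u x - v x)"
  unfolding radial_on_def
proof (intro ballI impI)
  fix x y assume "x \<in> S" "y \<in> S" "norm x = norm y"
  then have "u x = u y" "v x = v y" using assms unfolding radial_on_def by blast+
  then show "u x - v x = u y - v y" by simp
qed

definition rad_deriv2 :: "(real^'n::finite \<Rightarrow> real) \<Rightarrow> real^'n \<Rightarrow> real" where
  "rad_deriv2 w x = frechet_derivative (rad_deriv w) (at x) (x /\<^sub>R norm x)"

lemma has_derivative_rad_deriv:
  fixes w :: "real^'n::finite \<Rightarrow> real"
  assumes "C2_on S w" "open S" "x \<in> S" "x \<noteq> 0"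
  shows "(rad_deriv w has_derivative frechet_derivative (rad_deriv w) (at x)) (at x)"
  using rad_deriv_differentiable[OF C2_on_differentiable_at(2)[OF assms(1-3)] assms(4)]
  by (simp add: frechet_derivative_works)

lemma rad_deriv2_diff:
  fixes u v :: "real^'n::finite \<Rightarrow> real"
  assumes S: "open S" and u: "C2_on S u" and v: "C2_on S v" and x: "x \<in> S" "x \<noteq> 0"
  shows "rad_deriv2 (\<lambda>y. u y - v y) x = rad_deriv2 u x - rad_deriv2 v x"
proof -
  let ?Du = "frechet_derivative (rad_deriv u) (at x)"
  let ?Dv = "frechet_derivative (rad_deriv v) (at x)"
  have "rad_deriv (\<lambda>y. u y - v y) y = rad_deriv u y - rad_deriv v y" if "y \<in> S" for y
    using rad_deriv_diff C2_on_differentiable_at(1) u v S that by blast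
  then have "frechet_derivative (rad_deriv (\<lambda>y. u y - v y)) (at x)
      = frechet_derivative (\<lambda>y. rad_deriv u y - rad_deriv v y) (at x)"
    by (rule frechet_derivative_cong_open[OF S x(1)])
  also have "\<dots> = (\<lambda>h. ?Du h - ?Dv h)"
    using has_derivative_diff[OF has_derivative_rad_deriv[OF u S x] has_derivative_rad_deriv[OF v S x]]
    by (rule frechet_derivative_at[symmetric])
  finally show ?thesis by (simp add: rad_deriv2_def)
qed

definition phi_p :: "real \<Rightarrow> real \<Rightarrow> real" where
  "phi_p p t = \<bar>t\<bar> powr (p - 2) * t"

text \<open>The case distinction is forced by the convention 0 powr 0 = 0.\<close>
definition phi_p_deriv :: "real \<Rightarrow> real \<Rightarrow> real" where
  "phi_p_deriv p t = (if p = 2 then 1 else (p - 1) * \<bar>t\<bar> powr (p - 2))"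

lemma phi_p_nonneg: "t \<ge> 0 \<Longrightarrow> phi_p p t = t powr (p - 1)"
  by (cases "t = 0") (auto simp: phi_p_def powr_diff power2_eq_square)

lemma phi_p_deriv_mult_add:
  "p \<noteq> 2 \<Longrightarrow> phi_p_deriv p c * d + K * phi_p p c = \<bar>c\<bar> powr (p - 2) * ((p - 1) * d + K * c)"
  by (simp add: phi_p_deriv_def phi_p_def algebra_simps)

lemma has_real_derivative_phi_p_0:
  assumes "p > 2"
  shows "(phi_p p has_real_derivative 0) (at 0)"
proof -
  have "((\<lambda>y. \<bar>y\<bar> powr (p - 2)) \<longlongrightarrow> 0) (at 0)"
    by (rule tendsto_zero_powrI) (use assms in \<open>auto intro!: tendsto_eq_intros\<close>)
  moreover have "\<forall>\<^sub>F y in at 0. \<bar>y\<bar> powr (p - 2) = (phi_p p y - phi_p p 0) / (y - 0)"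
    by (auto simp: phi_p_def eventually_at_filter)
  ultimately have "((\<lambda>y. (phi_p p y - phi_p p 0) / (y - 0)) \<longlongrightarrow> 0) (at 0)"
    using tendsto_cong by force
  then show ?thesis by (simp add: has_field_derivative_iff)
qed

lemma has_real_derivative_phi_p:
  assumes p: "p \<ge> 2"
  shows "(phi_p p has_real_derivative phi_p_deriv p t) (at t)"
proof (cases "p = 2")
  case True
  then have "phi_p p = (\<lambda>y. y)" by (auto simp: phi_p_def fun_eq_iff)
  then show ?thesis using True by (simp add: phi_p_deriv_def)
next
  case False
  consider "t > 0" | "t < 0" | "t = 0" by linarith
  then show ?thesis
  proof cases
    case 1
    have "((\<lambda>y. y powr (p - 1)) has_real_derivative (p - 1) * t powr (p - 1 - 1)) (at t)"
      using has_real_derivative_powr 1 by blast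
    moreover have "y \<in> {0<..} \<Longrightarrow> y powr (p - 1) = phi_p p y" for y
      by (simp add: phi_p_def powr_diff power2_eq_square)
    ultimately have "(phi_p p has_real_derivative (p - 1) * t powr (p - 1 - 1)) (at t)"
      using has_field_derivative_transform_within_open[of _ _ t "{0<..}"] 1 by auto
    then show ?thesis using 1 False by (simp add: phi_p_deriv_def)
  next
    case 2
    have "((\<lambda>y. - ((- y) powr (p - 1))) has_real_derivative (p - 1) * (- t) powr (p - 1 - 1)) (at t)"
      using 2 by (auto intro!: derivative_eq_intros)
    moreover have "y \<in> {..<0} \<Longrightarrow> - ((- y) powr (p - 1)) = phi_p p y" for y
      by (simp add: phi_p_def powr_diff power2_eq_square)
    ultimately have "(phi_p p has_real_derivative (p - 1) * (- t) powr (p - 1 - 1)) (at t)"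
      using has_field_derivative_transform_within_open[of _ _ t "{..<0}"] 2 by auto
    then show ?thesis using 2 False by (simp add: phi_p_deriv_def)
  next
    case 3
    then show ?thesis
      using has_real_derivative_phi_p_0[of p] False p by (simp add: phi_p_deriv_def)
  qed
qed

lemma sum_pd_radial_field:
  fixes g :: "real^'n::finite \<Rightarrow> real"
  assumes g: "(g has_derivative Dg) (at x)" and x: "x \<noteq> 0"
  shows "(\<Sum>i\<in>UNIV. pd i (\<lambda>y. g y / norm y * y $ i) x)
    = (Dg x + (real CARD('n) - 1) * g x) / norm x"
proof -
  define r where "r = norm x"
  have r: "r > 0" using x by (simp add: r_def)
  have "(norm has_derivative (\<lambda>h. h \<bullet> sgn x)) (at x)"
    using has_derivative_norm[OF x] by simp
  from has_derivative_divide'[OF g this]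
  have "((\<lambda>y. g y / norm y) has_derivative
      (\<lambda>h. (Dg h * r - g x * (h \<bullet> sgn x)) / (r * r))) (at x)"
    using x by (simp add: r_def)
  moreover have "((\<lambda>y. y $ i) has_derivative (\<lambda>h. h $ i)) (at x)" for i
    using bounded_linear.has_derivative[OF bounded_linear_vec_nth has_derivative_id] by simp
  ultimately have deriv: "((\<lambda>y. g y / norm y * y $ i) has_derivative
      (\<lambda>h. (Dg h * r - g x * (h \<bullet> sgn x)) / (r * r) * x $ i + g x / r * h $ i)) (at x)" for i
    by (rule has_derivative_mult[THEN has_derivative_eq_rhs]) (simp add: fun_eq_iff algebra_simps r_def)
  have pd: "pd i (\<lambda>y. g y / norm y * y $ i) x
      = x $ i * Dg (axis i 1) / r - g x * (x $ i * x $ i) / (r * r * r) + g x / r" for i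
  proof -
    have "axis i 1 \<bullet> sgn x = x $ i / r"
      by (simp add: inner_commute inner_axis sgn_div_norm r_def divide_inverse mult.commute)
    then have "pd i (\<lambda>y. g y / norm y * y $ i) x
        = (Dg (axis i 1) * r - g x * (x $ i / r)) / (r * r) * x $ i + g x / r"
      using has_derivative_imp_pd_eq[OF deriv, of i i] by simp
    then show ?thesis using r by (simp add: field_simps)
  qed
  have "(\<Sum>i\<in>UNIV. x $ i * Dg (axis i 1)) = Dg x"
    using g has_derivative_linear linear_eq_sum_axis by metis
  moreover have "(\<Sum>i\<in>UNIV. x $ i * x $ i) = r * r"
    using dot_square_norm[of x] by (simp add: r_def inner_vec_def power2_eq_square)
  ultimately show ?thesis
    using r unfolding pd
    by (simp add: sum.distrib sum_subtractf flip: sum_divide_distrib sum_distrib_left)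
      (simp add: r_def field_simps)
qed

lemma p_laplacian_radial:
  fixes w :: "real^'n::finite \<Rightarrow> real"
  assumes \<Omega>: "open \<Omega>" "\<forall>x\<in>\<Omega>. \<forall>y. norm y = norm x \<longrightarrow> y \<in> \<Omega>" "0 \<notin> \<Omega>"
    and rad: "radial_on \<Omega> w" and w: "C2_on \<Omega> w" and x: "x \<in> \<Omega>" and p: "p \<ge> 2"
  shows "p_laplacian p w x = phi_p_deriv p (rad_deriv w x) * rad_deriv2 w x
    + (real CARD('n) - 1) / norm x * phi_p p (rad_deriv w x)"
proof -
  let ?D = "frechet_derivative (rad_deriv w) (at x)"
  have x0: "x \<noteq> 0" using x \<Omega>(3) by auto
  have flux: "norm (grad w y) powr (p - 2) * grad w y $ i = phi_p p (rad_deriv w y) / norm y * y $ i"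
    if "y \<in> \<Omega>" for y i
  proof -
    have "y \<noteq> 0" using that \<Omega>(3) by auto
    moreover note grad_radial[OF \<Omega>(2) rad that this C2_on_differentiable_at(1)[OF w \<Omega>(1) that]]
    ultimately show ?thesis by (simp add: phi_p_def abs_mult field_simps)
  qed
  have D: "(rad_deriv w has_derivative ?D) (at x)"
    using has_derivative_rad_deriv[OF w \<Omega>(1) x x0] .
  from DERIV_compose_FDERIV[OF has_real_derivative_phi_p[OF p] this]
  have "p_laplacian p w x
      = (?D x * phi_p_deriv p (rad_deriv w x) + (real CARD('n) - 1) * phi_p p (rad_deriv w x)) / norm x"
    unfolding p_laplacian_def using pd_cong_open[OF \<Omega>(1) x flux] sum_pd_radial_field x0 by simp
  moreover have D2: "?D x / norm x = rad_deriv2 w x"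
    using linear_scale[OF has_derivative_linear[OF D], of "inverse (norm x)" x]
    by (simp add: rad_deriv2_def divide_inverse_commute)
  ultimately show ?thesis using x0 by (simp add: field_simps flip: D2)
qed

text \<open>The perspective (x, a) \<mapsto> x powr s / a powr (s - 1) of the convex function x powr s
  is convex and positively homogeneous, hence subadditive.\<close>
lemma powr_perspective_subadditive:
  fixes s x y a b :: real
  assumes s: "s \<ge> 1" and x: "x > 0" and y: "y \<ge> 0" and a: "a > 0" and b: "b > 0"
  shows "(x + y) powr s / (a + b) powr (s - 1) \<le> x powr s / a powr (s - 1) + y powr s / b powr (s - 1)"
proof (cases "y = 0")
  case True
  have "a powr (s - 1) \<le> (a + b) powr (s - 1)"
    using a b s by (intro powr_mono2) auto
  then have "x powr s / (a + b) powr (s - 1) \<le> x powr s / a powr (s - 1)"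
    using a b by (intro divide_left_mono) auto
  then show ?thesis using True by simp
next
  case False
  have persp: "c * (z / c) powr s = z powr s / c powr (s - 1)" if "c > 0" "z \<ge> 0" for c z :: real
    using that by (simp add: powr_divide powr_diff field_simps)
  define t where "t = b / (a + b)"
  have t: "0 \<le> t" "t \<le> 1" "1 - t = a / (a + b)" using a b by (auto simp: t_def field_simps)
  have "(x + y) / (a + b) = (1 - t) *\<^sub>R (x / a) + t *\<^sub>R (y / b)"
    using a b t(3) unfolding t_def by (simp add: add_divide_distrib)
  also have "\<dots> powr s \<le> (1 - t) * (x / a) powr s + t * (y / b) powr s"
    using convex_onD[OF powr_convex[OF s] t(1,2), of "x / a" "y / b"] x y a b False by simp
  finally have "(a + b) * ((x + y) / (a + b)) powr s
      \<le> (a + b) * ((1 - t) * (x / a) powr s + t * (y / b) powr s)"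
    using a b by (intro mult_left_mono) auto
  also have "\<dots> = a * (x / a) powr s + b * (y / b) powr s"
    using a b t(3) unfolding t_def by (simp add: distrib_left)
  finally show ?thesis using a b x y by (simp add: persp)
qed

lemma abs_powr_weighted_difference_le:
  fixes s a b X Y V u v :: real
  assumes s: "s \<ge> 1" and V: "V \<ge> 0" and v: "0 < v" "v \<le> u"
    and ab: "(a < b \<and> b < 0) \<or> (b < a \<and> 0 < b)"
    and sub: "- (\<bar>a\<bar> powr (s - 1) * X) \<le> V * u powr s"
    and super: "- (\<bar>b\<bar> powr (s - 1) * Y) \<ge> V * v powr s"
  shows "- (\<bar>a - b\<bar> powr (s - 1) * (X - Y)) \<le> V * (u - v) powr s"
proof -
  define A B C
    where "A = \<bar>a\<bar> powr (s - 1)" "B = \<bar>b\<bar> powr (s - 1)" "C = \<bar>a - b\<bar> powr (s - 1)"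
  have pos: "A > 0" "B > 0" "C > 0" using ab by (auto simp: A_B_C_def)
  have "\<bar>a\<bar> = \<bar>b\<bar> + \<bar>a - b\<bar>" "\<bar>b\<bar> > 0" "\<bar>a - b\<bar> > 0"
    using ab by auto
  then have persp: "u powr s / A \<le> v powr s / B + (u - v) powr s / C"
    using powr_perspective_subadditive[OF s v(1), of "u - v" "\<bar>b\<bar>" "\<bar>a - b\<bar>"] v
    by (simp add: A_B_C_def)
  have "- X \<le> V * u powr s / A" "- Y \<ge> V * v powr s / B"
    using sub super pos by (simp_all add: A_B_C_def field_simps)
  then have "- (X - Y) \<le> V * (u powr s / A - v powr s / B)"
    by (simp add: algebra_simps)
  also have "\<dots> \<le> V * ((u - v) powr s / C)"
    using persp V by (intro mult_left_mono) auto
  finally show ?thesis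
    using pos by (simp add: A_B_C_def field_simps)
qed

lemma radial_sub_super_difference:
  fixes a b a2 b2 K V u v p :: real
  assumes p: "p \<ge> 2" and V: "V \<ge> 0" and v: "0 < v" "v \<le> u"
    and ab: "(a \<le> b \<and> b < 0) \<or> (b \<le> a \<and> 0 < b)"
    and sub: "- (phi_p_deriv p a * a2 + K * phi_p p a) - V * phi_p p u \<le> 0"
    and super: "- (phi_p_deriv p b * b2 + K * phi_p p b) - V * phi_p p v \<ge> 0"
  shows "- (phi_p_deriv p (a - b) * (a2 - b2) + K * phi_p p (a - b)) - V * phi_p p (u - v) \<le> 0"
proof (cases "p = 2")
  case True
  then have "phi_p p = (\<lambda>t. t)" "phi_p_deriv p = (\<lambda>t. 1)"
    by (auto simp: phi_p_def phi_p_deriv_def fun_eq_iff)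
  then show ?thesis using sub super by (simp add: algebra_simps)
next
  case False
  define s where "s = p - 1"
  have s: "s \<ge> 1" "p - 2 = s - 1" using p by (auto simp: s_def)
  have phi_uv: "phi_p p u = u powr s" "phi_p p v = v powr s" "phi_p p (u - v) = (u - v) powr s"
    using v by (simp_all add: phi_p_nonneg s_def)
  note op = phi_p_deriv_mult_add[OF False, unfolded s(2)]
  have "(p - 1) * (a2 - b2) + K * (a - b) = ((p - 1) * a2 + K * a) - ((p - 1) * b2 + K * b)"
    by (simp add: algebra_simps)
  moreover have "a \<noteq> b \<Longrightarrow> (a < b \<and> b < 0) \<or> (b < a \<and> 0 < b)"
    using ab by auto
  ultimately show ?thesis
    using abs_powr_weighted_difference_le[OF s(1) V v _ _ _, of a b "(p - 1) * a2 + K * a"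
        "(p - 1) * b2 + K * b"] sub super V s
    unfolding op phi_uv by (cases "a = b") auto
qed

lemma radial_difference_subsolution_at:
  fixes u v :: "real^'n::finite \<Rightarrow> real"
  assumes \<Omega>: "open \<Omega>" "\<forall>x\<in>\<Omega>. \<forall>y. norm y = norm x \<longrightarrow> y \<in> \<Omega>" "0 \<notin> \<Omega>"
    and u: "radial_on \<Omega> u" "C2_on \<Omega> u" and v: "radial_on \<Omega> v" "C2_on \<Omega> v"
    and x: "x \<in> \<Omega>" and p: "p \<ge> 2" and V: "V \<ge> 0" and uv: "0 < v x" "v x \<le> u x"
    and ab: "(rad_deriv u x \<le> rad_deriv v x \<and> rad_deriv v x < 0)
      \<or> (rad_deriv v x \<le> rad_deriv u x \<and> 0 < rad_deriv v x)"
    and sub: "- p_laplacian p u x - V * phi_p p (u x) \<le> 0"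
    and super: "- p_laplacian p v x - V * phi_p p (v x) \<ge> 0"
  shows "- p_laplacian p (\<lambda>y. u y - v y) x - V * phi_p p (u x - v x) \<le> 0"
proof -
  define K where "K = (real CARD('n) - 1) / norm x"
  have "x \<noteq> 0" using x \<Omega>(3) by auto
  note L = p_laplacian_radial[OF \<Omega> u x p] p_laplacian_radial[OF \<Omega> v x p]
    p_laplacian_radial[OF \<Omega> radial_on_diff[OF u(1) v(1)] C2_on_diff[OF \<Omega>(1) u(2) v(2)] x p]
  have "- (phi_p_deriv p (rad_deriv u x - rad_deriv v x) * (rad_deriv2 u x - rad_deriv2 v x)
      + K * phi_p p (rad_deriv u x - rad_deriv v x)) - V * phi_p p (u x - v x) \<le> 0"
    using sub super unfolding L(1,2) K_def[symmetric] by (rule radial_sub_super_difference[OF p V uv ab])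
  then show ?thesis
    unfolding L(3) K_def rad_deriv2_diff[OF \<Omega>(1) u(2) v(2) x \<open>x \<noteq> 0\<close>]
      rad_deriv_diff[OF C2_on_differentiable_at(1)[OF u(2) \<Omega>(1) x]
        C2_on_differentiable_at(1)[OF v(2) \<Omega>(1) x]] .
qed

theorem theorem2p2:
  fixes \<Omega> :: "(real^'n::finite) set" and V u v :: "real^'n \<Rightarrow> real" and p :: real
  assumes "CARD('n) \<ge> 2" and "p \<ge> 2"
    and "radially_symmetric_domain \<Omega>"
    and "continuous_on \<Omega> V" and "\<forall>x\<in>\<Omega>. V x \<ge> 0"
    and "radial_on \<Omega> u" and "radial_on \<Omega> v"
    and "C2_on \<Omega> u" and "C2_on \<Omega> v"
    and "\<forall>x\<in>\<Omega>. 0 < v x \<and> v x \<le> u x"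
    and "(\<forall>x\<in>\<Omega>. rad_deriv u x \<le> rad_deriv v x \<and> rad_deriv v x < 0)
       \<or> (\<forall>x\<in>\<Omega>. rad_deriv u x \<ge> rad_deriv v x \<and> rad_deriv v x > 0)"
    and "subsolution p V \<Omega> u" and "supersolution p V \<Omega> v"
  shows "subsolution p V \<Omega> (\<lambda>x. u x - v x)"
proof -
  have \<Omega>: "open \<Omega>" "\<forall>x\<in>\<Omega>. \<forall>y. norm y = norm x \<longrightarrow> y \<in> \<Omega>"
    using assms(3) by (auto simp: radially_symmetric_domain_def)
  \<comment> \<open>Since inverse 0 = 0, rad_deriv vanishes at the origin; the strict sign of
    rad_deriv v therefore keeps the origin out of \<Omega>.\<close>
  have "0 \<notin> \<Omega>"
  proof
    assume "0 \<in> \<Omega>"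
    with assms(11) have "rad_deriv v 0 \<noteq> 0" by auto
    then show False by (simp add: rad_deriv_def)
  qed
  note pointwise = radial_difference_subsolution_at[OF \<Omega> this assms(6,8,7,9) _ assms(2)]
  have "- p_laplacian p (\<lambda>x. u x - v x) x - V x * phi_p p (u x - v x) \<le> 0"
    if x: "x \<in> \<Omega>" for x
    using assms(5,10-13) x
    by (intro pointwise[OF x]) (auto simp: subsolution_def supersolution_def phi_p_def mult.assoc)
  then show ?thesis
    using C2_on_diff[OF \<Omega>(1) assms(8,9)] by (simp add: subsolution_def phi_p_def mult.assoc)
qed

end
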